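(* Let $R,Q,S$ be rod sets. The following are equivalent: (1) $R\xrightarrow{Q}S$; (2) $D(n,R,S)=C(n,Q)$ for all $n>0$; (3) $\langle\mathrm{Trains}(R)\rangle\equiv\langle\mathrm{Trains}(S)\rangle\cup Q\cup\langle\mathrm{Trains}(S)\rangle Q$; (4) for all $n>0$, $F(n,R)=F(n,S)+\sum_{q\in Q}(\operatorname{sign}q)F(n-\operatorname{len}q,S)$.
   Context: A rod is a triple $(r,c,\varepsilon)$ with $r$ a positive integer (length), $c$ a tag (color), $\varepsilon\in\{\pm1\}$ (sign); antirods have sign $-1$. A rod set is a set of rods with finitely many of each length. A train built from $R$ is a finite sequence of rods of $R$ (including the empty train), with length the sum of lengths and sign the product of signs; $\mathrm{Trains}(R)$ is the set of such trains, and $\langle\mathrm{Trains}(R)\rangle$ is the rod set with one rod, of the same length and sign, for each nonempty train. $F(n,R)$ is the number of positive trains of length $n$ minus the number of negative ones, with $F(0,R)=1$, $F(n,R)=0$ for $n<0$. $C(n,R)$ = (number of positive rods of length $n$) $-$ (number of antirods of length $n$); $R\equiv S$ means $C(n,R)=C(n,S)$ for all $n>0$. Unions are disjoint unions; $\overline{Q}$ reverses all signs; $QR$ has one rod per pair $(q,r)\in Q\times R$, of length $\operatorname{len}q+\operatorname{len}r$ and sign $\operatorname{sign}q\operatorname{sign}r$. $R\xrightarrow{Q}S$ means $S\equiv R\cup\overline{Q}\cup QR$. The discrepancy is $D(n,R,S)=F(n,R)-\sum_{k\in S}(\operatorname{sign}k)F(n-\operatorname{len}k,R)$. *)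

theory Defs
  imports Main
begin

type_synonym 'c rod = "nat \<times> 'c \<times> int"

definition rlen :: "'c rod \<Rightarrow> nat" where "rlen k = fst k"
definition rcol :: "'c rod \<Rightarrow> 'c" where "rcol k = fst (snd k)"
definition rsign :: "'c rod \<Rightarrow> int" where "rsign k = snd (snd k)"

definition is_rodset :: "'c rod set \<Rightarrow> bool" where
  "is_rodset R \<longleftrightarrow> (\<forall>k\<in>R. rlen k > 0 \<and> (rsign k = 1 \<or> rsign k = -1))
                  \<and> (\<forall>n. finite {k\<in>R. rlen k = n})"

definition Trains :: "'c rod set \<Rightarrow> 'c rod list set" where
  "Trains R = lists R"

definition tlen :: "'c rod list \<Rightarrow> nat" where "tlen t = sum_list (map rlen t)"
definition tsign :: "'c rod list \<Rightarrow> int" where "tsign t = prod_list (map rsign t)"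

definition F :: "int \<Rightarrow> 'c rod set \<Rightarrow> int" where
  "F n R = (if n < 0 then 0 else (\<Sum>t\<in>{t\<in>Trains R. tlen t = nat n}. tsign t))"

definition C :: "nat \<Rightarrow> 'c rod set \<Rightarrow> int" where
  "C n R = int (card {k\<in>R. rlen k = n \<and> rsign k = 1}) - int (card {k\<in>R. rlen k = n \<and> rsign k = -1})"

definition rod_equiv :: "'c rod set \<Rightarrow> 'd rod set \<Rightarrow> bool" where
  "rod_equiv R S \<longleftrightarrow> (\<forall>n>0. C n R = C n S)"

text \<open>\<langle>Trains(R)\<rangle>: one rod (same length and sign) per nonempty train, tagged by the train.\<close>
definition train_rods :: "'c rod set \<Rightarrow> ('c rod list) rod set" where
  "train_rods R = {(tlen t, t, tsign t) | t. t \<in> Trains R \<and> t \<noteq> []}"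

definition rod_union :: "'c rod set \<Rightarrow> 'd rod set \<Rightarrow> ('c + 'd) rod set" where
  "rod_union R S = {(r, Inl c, e) | r c e. (r, c, e) \<in> R} \<union> {(r, Inr c, e) | r c e. (r, c, e) \<in> S}"

definition rod_bar :: "'c rod set \<Rightarrow> 'c rod set" where
  "rod_bar Q = {(r, c, - e) | r c e. (r, c, e) \<in> Q}"

definition rod_prod :: "'c rod set \<Rightarrow> 'd rod set \<Rightarrow> ('c rod \<times> 'd rod) rod set" where
  "rod_prod Q R = {(rlen q + rlen r, (q, r), rsign q * rsign r) | q r. q \<in> Q \<and> r \<in> R}"

definition rod_arrow :: "'a rod set \<Rightarrow> 'b rod set \<Rightarrow> 'c rod set \<Rightarrow> bool" where
  "rod_arrow R Q S \<longleftrightarrow> rod_equiv S (rod_union (rod_union R (rod_bar Q)) (rod_prod Q R))"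

text \<open>Discrepancy D(n,R,S); only rods with len k \<le> n contribute (F vanishes at negative arguments),
  so the sum is restricted to that finite set.\<close>
definition D :: "nat \<Rightarrow> 'a rod set \<Rightarrow> 'b rod set \<Rightarrow> int" where
  "D n R S = F (int n) R - (\<Sum>k\<in>{k\<in>S. rlen k \<le> n}. rsign k * F (int n - int (rlen k)) R)"

end

theory Submission
  imports Defs "HOL-Computational_Algebra.Formal_Power_Series"
begin

text \<open>Encode a rod set \<open>A\<close> by its generating series \<open>\<Sum>\<^sub>n C(n,A) x\<^sup>n\<close> in \<open>\<int>[[x]]\<close>.
  Disjoint union, sign reversal and the product of rod sets become sum, negation and product of
  series. Splitting off the first rod of a train shows that the series \<open>T\<^sub>R = \<Sum>\<^sub>n F(n,R) x\<^sup>n\<close>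
  satisfies \<open>T\<^sub>R (1 - R) = 1\<close>, and \<open>\<langle>Trains(R)\<rangle>\<close> has series \<open>T\<^sub>R - 1\<close>. Each of the four
  conditions then becomes an equivalent form of \<open>1 - S = (1 + Q)(1 - R)\<close>, using that \<open>1 - R\<close>
  and \<open>1 - S\<close> are invertible.\<close>

subsection \<open>Generating series of rod sets\<close>

definition rods_of_length :: "'c rod set \<Rightarrow> nat \<Rightarrow> 'c rod set" where
  "rods_of_length A n = {k\<in>A. rlen k = n}"

definition signed_count :: "'c rod set \<Rightarrow> nat \<Rightarrow> int" where
  "signed_count A n = (\<Sum>k\<in>rods_of_length A n. rsign k)"

definition rod_fps :: "'c rod set \<Rightarrow> int fps" where
  "rod_fps A = Abs_fps (signed_count A)"

lemma finite_rods_of_length: "is_rodset A \<Longrightarrow> finite (rods_of_length A n)"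
  by (simp add: is_rodset_def rods_of_length_def)

lemma finite_rods_of_length_le:
  assumes "is_rodset A" shows "finite {k\<in>A. rlen k \<le> n}"
proof (rule finite_subset)
  show "{k\<in>A. rlen k \<le> n} \<subseteq> (\<Union>m\<le>n. rods_of_length A m)"
    by (auto simp: rods_of_length_def)
  show "finite (\<Union>m\<le>n. rods_of_length A m)"
    using finite_rods_of_length[OF assms] by blast
qed

lemma C_eq_signed_count:
  assumes A: "is_rodset A" shows "C n A = signed_count A n"
proof -
  let ?P = "{k\<in>A. rlen k = n \<and> rsign k = 1}" and ?N = "{k\<in>A. rlen k = n \<and> rsign k = -1}"
  have fin: "finite ?P" "finite ?N"
    using finite_rods_of_length[OF A, of n] by (auto simp: rods_of_length_def elim: rev_finite_subset)
  have "rods_of_length A n = ?P \<union> ?N"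
    using A by (auto simp: rods_of_length_def is_rodset_def)
  then have "signed_count A n = sum rsign (?P \<union> ?N)"
    by (simp add: signed_count_def)
  also have "\<dots> = sum rsign ?P + sum rsign ?N"
    by (rule sum.union_disjoint) (use fin in auto)
  also have "sum rsign ?P = int (card ?P)" by simp
  also have "sum rsign ?N = - int (card ?N)" by simp
  finally show ?thesis by (simp add: C_def)
qed

lemma signed_count_0:
  assumes "is_rodset A" shows "signed_count A 0 = 0"
proof -
  have "rods_of_length A 0 = {}"
    using assms by (auto simp: rods_of_length_def is_rodset_def)
  then show ?thesis by (simp add: signed_count_def)
qed

lemma sum_rods_length_le_group:
  assumes A: "is_rodset A"
  shows "(\<Sum>k\<in>{k\<in>A. rlen k \<le> n}. rsign k * g (rlen k)) = (\<Sum>m=0..n. signed_count A m * g m)"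
proof -
  have "(\<Sum>k\<in>{k\<in>A. rlen k \<le> n}. rsign k * g (rlen k))
      = (\<Sum>m=0..n. \<Sum>k\<in>{k\<in>{k\<in>A. rlen k \<le> n}. rlen k = m}. rsign k * g (rlen k))"
    by (rule sum.group[symmetric]) (use finite_rods_of_length_le[OF A] in auto)
  also have "\<dots> = (\<Sum>m=0..n. signed_count A m * g m)"
  proof (rule sum.cong)
    fix m assume "m \<in> {0..n}"
    then have "{k\<in>{k\<in>A. rlen k \<le> n}. rlen k = m} = rods_of_length A m"
      by (auto simp: rods_of_length_def)
    then show "(\<Sum>k\<in>{k\<in>{k\<in>A. rlen k \<le> n}. rlen k = m}. rsign k * g (rlen k)) = signed_count A m * g m"
      by (simp add: signed_count_def sum_distrib_right rods_of_length_def)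
  qed simp
  finally show ?thesis .
qed

lemma rod_equiv_iff_rod_fps_eq:
  assumes A: "is_rodset A" and B: "is_rodset B"
  shows "rod_equiv A B \<longleftrightarrow> rod_fps A = rod_fps B"
proof -
  have "rod_fps A = rod_fps B \<longleftrightarrow> (\<forall>n. signed_count A n = signed_count B n)"
    by (auto simp: rod_fps_def fps_eq_iff)
  also have "\<dots> \<longleftrightarrow> rod_equiv A B"
    using signed_count_0[OF A] signed_count_0[OF B]
    by (metis C_eq_signed_count[OF A] C_eq_signed_count[OF B] rod_equiv_def gr0I)
  finally show ?thesis ..
qed

subsection \<open>Trains\<close>

definition trains_of_length :: "'c rod set \<Rightarrow> nat \<Rightarrow> 'c rod list set" where
  "trains_of_length R n = {t\<in>lists R. tlen t = n}"

definition train_fps :: "'c rod set \<Rightarrow> int fps" where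
  "train_fps R = Abs_fps (\<lambda>n. F (int n) R)"

lemma fps_nth_rod_fps_mult_train_fps:
  assumes "is_rodset A"
  shows "fps_nth (rod_fps A * train_fps X) n
       = (\<Sum>k\<in>{k\<in>A. rlen k \<le> n}. rsign k * F (int n - int (rlen k)) X)"
  unfolding sum_rods_length_le_group[OF assms, of "\<lambda>m. F (int n - int m) X"]
  by (simp add: fps_mult_nth rod_fps_def train_fps_def of_nat_diff)

lemma tlen_Nil [simp]: "tlen [] = 0" and tlen_Cons [simp]: "tlen (k # t) = rlen k + tlen t"
  by (simp_all add: tlen_def)

lemma tsign_Nil [simp]: "tsign [] = 1" and tsign_Cons [simp]: "tsign (k # t) = rsign k * tsign t"
  by (simp_all add: tsign_def)

lemma tlen_pos: "is_rodset R \<Longrightarrow> t \<in> lists R \<Longrightarrow> t \<noteq> [] \<Longrightarrow> tlen t > 0"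
  by (cases t) (auto simp: is_rodset_def)

lemma tsign_cases: "is_rodset R \<Longrightarrow> t \<in> lists R \<Longrightarrow> tsign t = 1 \<or> tsign t = -1"
  by (induction t) (auto simp: is_rodset_def)

lemma trains_of_length_0: "is_rodset R \<Longrightarrow> trains_of_length R 0 = {[]}"
  using tlen_pos by (fastforce simp: trains_of_length_def)

lemma trains_of_length_split_first:
  assumes "n > 0"
  shows "trains_of_length R n
       = (\<lambda>(k, t). k # t) ` (SIGMA k:{k\<in>R. rlen k \<le> n}. trains_of_length R (n - rlen k))"
proof
  show "trains_of_length R n
     \<subseteq> (\<lambda>(k, t). k # t) ` (SIGMA k:{k\<in>R. rlen k \<le> n}. trains_of_length R (n - rlen k))"
  proof
    fix t assume t: "t \<in> trains_of_length R n"
    then obtain k t' where "t = k # t'"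
      using assms by (cases t) (auto simp: trains_of_length_def)
    with t show "t \<in> (\<lambda>(k, t). k # t) ` (SIGMA k:{k\<in>R. rlen k \<le> n}. trains_of_length R (n - rlen k))"
      by (auto simp: trains_of_length_def intro!: image_eqI[where x = "(k, t')"])
  qed
qed (auto simp: trains_of_length_def)

lemma finite_trains_of_length:
  assumes R: "is_rodset R" shows "finite (trains_of_length R n)"
proof (induction n rule: less_induct)
  case (less n)
  show ?case
  proof (cases "n = 0")
    case True
    then show ?thesis using trains_of_length_0[OF R] by simp
  next
    case False
    have "finite (SIGMA k:{k\<in>R. rlen k \<le> n}. trains_of_length R (n - rlen k))"
    proof (rule finite_SigmaI)
      show "finite {k\<in>R. rlen k \<le> n}" by (rule finite_rods_of_length_le[OF R])
      fix k assume "k \<in> {k\<in>R. rlen k \<le> n}"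
      then have "n - rlen k < n" using R False by (auto simp: is_rodset_def)
      then show "finite (trains_of_length R (n - rlen k))" by (rule less)
    qed
    then show ?thesis using trains_of_length_split_first[of n R] False by simp
  qed
qed

lemma F_eq_sum_trains_of_length: "F (int n) R = (\<Sum>t\<in>trains_of_length R n. tsign t)"
  by (simp add: F_def trains_of_length_def Trains_def)

lemma F_0: "is_rodset R \<Longrightarrow> F 0 R = 1"
  using F_eq_sum_trains_of_length[of 0 R] trains_of_length_0[of R] by simp

lemma F_first_rod_recurrence:
  assumes R: "is_rodset R" and n: "n > 0"
  shows "F (int n) R = (\<Sum>k\<in>{k\<in>R. rlen k \<le> n}. rsign k * F (int n - int (rlen k)) R)"
proof -
  let ?K = "{k\<in>R. rlen k \<le> n}"
  have inj: "inj_on (\<lambda>(k, t). k # t) (SIGMA k:?K. trains_of_length R (n - rlen k))"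
    by (auto simp: inj_on_def)
  have "F (int n) R = (\<Sum>p\<in>(SIGMA k:?K. trains_of_length R (n - rlen k)). tsign ((\<lambda>(k, t). k # t) p))"
    unfolding F_eq_sum_trains_of_length trains_of_length_split_first[OF n]
    by (rule sum.reindex[OF inj, unfolded comp_def])
  also have "\<dots> = (\<Sum>k\<in>?K. \<Sum>t\<in>trains_of_length R (n - rlen k). rsign k * tsign t)"
    by (subst sum.Sigma) (auto simp: finite_rods_of_length_le[OF R] finite_trains_of_length[OF R] split_def)
  also have "\<dots> = (\<Sum>k\<in>?K. rsign k * F (int n - int (rlen k)) R)"
  proof (rule sum.cong)
    fix k assume "k \<in> ?K"
    then have "int n - int (rlen k) = int (n - rlen k)" by simp
    then show "(\<Sum>t\<in>trains_of_length R (n - rlen k). rsign k * tsign t)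
             = rsign k * F (int n - int (rlen k)) R"
      by (simp only: F_eq_sum_trains_of_length sum_distrib_left)
  qed simp
  finally show ?thesis .
qed

lemma train_fps_mult_one_minus_rod_fps:
  assumes R: "is_rodset R" shows "train_fps R * (1 - rod_fps R) = 1"
proof -
  have "fps_nth (train_fps R) n = fps_nth (1 + rod_fps R * train_fps R) n" for n
  proof (cases "n = 0")
    case True
    then show ?thesis
      using F_0[OF R] signed_count_0[OF R] by (simp add: train_fps_def rod_fps_def fps_mult_nth)
  next
    case False
    then show ?thesis
      using F_first_rod_recurrence[OF R, of n] fps_nth_rod_fps_mult_train_fps[OF R, of R n]
      by (simp add: train_fps_def)
  qed
  then have "train_fps R = 1 + rod_fps R * train_fps R" by (rule fps_ext)
  then show ?thesis by (simp add: algebra_simps)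
qed

subsection \<open>Operations on rod sets\<close>

lemma is_rodsetI:
  assumes "\<And>k. k \<in> A \<Longrightarrow> rlen k > 0" and "\<And>k. k \<in> A \<Longrightarrow> rsign k = 1 \<or> rsign k = -1"
    and "\<And>n. finite (rods_of_length A n)"
  shows "is_rodset A"
  using assms by (simp add: is_rodset_def rods_of_length_def)

lemma rods_of_length_rod_union:
  "rods_of_length (rod_union A B) n
   = (\<lambda>(r, c, e). (r, Inl c, e)) ` rods_of_length A n \<union> (\<lambda>(r, c, e). (r, Inr c, e)) ` rods_of_length B n"
  by (auto simp: rods_of_length_def rod_union_def rlen_def image_iff)

lemma is_rodset_rod_union:
  assumes A: "is_rodset A" and B: "is_rodset B" shows "is_rodset (rod_union A B)"
proof (rule is_rodsetI)
  show "finite (rods_of_length (rod_union A B) n)" for n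
    by (simp add: rods_of_length_rod_union finite_rods_of_length[OF A] finite_rods_of_length[OF B])
qed (use A B in \<open>auto simp: rod_union_def is_rodset_def rlen_def rsign_def\<close>)

lemma rod_fps_rod_union:
  fixes A :: "'a rod set" and B :: "'b rod set"
  assumes A: "is_rodset A" and B: "is_rodset B"
  shows "rod_fps (rod_union A B) = rod_fps A + rod_fps B"
proof (rule fps_ext)
  fix n
  define inl :: "'a rod \<Rightarrow> ('a + 'b) rod" where "inl = (\<lambda>(r, c, e). (r, Inl c, e))"
  define inr :: "'b rod \<Rightarrow> ('a + 'b) rod" where "inr = (\<lambda>(r, c, e). (r, Inr c, e))"
  have "inj_on inl (rods_of_length A n)" "inj_on inr (rods_of_length B n)"
    by (auto simp: inj_on_def inl_def inr_def)
  moreover have "sum rsign (inl ` rods_of_length A n \<union> inr ` rods_of_length B n)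
               = sum rsign (inl ` rods_of_length A n) + sum rsign (inr ` rods_of_length B n)"
    by (rule sum.union_disjoint)
       (auto simp: inl_def inr_def finite_rods_of_length[OF A] finite_rods_of_length[OF B])
  ultimately have "signed_count (rod_union A B) n = signed_count A n + signed_count B n"
    by (simp add: signed_count_def rods_of_length_rod_union sum.reindex
        flip: inl_def inr_def) (simp add: inl_def inr_def rsign_def case_prod_beta)
  then show "fps_nth (rod_fps (rod_union A B)) n = fps_nth (rod_fps A + rod_fps B) n"
    by (simp add: rod_fps_def)
qed

lemma rods_of_length_rod_bar:
  "rods_of_length (rod_bar A) n = (\<lambda>(r, c, e). (r, c, - e)) ` rods_of_length A n"
  by (auto simp: rods_of_length_def rod_bar_def rlen_def image_iff)

lemma is_rodset_rod_bar:
  assumes A: "is_rodset A" shows "is_rodset (rod_bar A)"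
proof (rule is_rodsetI)
  show "finite (rods_of_length (rod_bar A) n)" for n
    unfolding rods_of_length_rod_bar using finite_rods_of_length[OF A] by blast
qed (use A in \<open>auto simp: rod_bar_def is_rodset_def rlen_def rsign_def\<close>)

lemma rod_fps_rod_bar: "rod_fps (rod_bar A) = - rod_fps A"
proof (rule fps_ext)
  fix n
  have inj: "inj_on (\<lambda>(r, c, e). (r, c, - e)) (rods_of_length A n)"
    by (auto simp: inj_on_def)
  have "signed_count (rod_bar A) n = - signed_count A n"
    unfolding signed_count_def rods_of_length_rod_bar sum.reindex[OF inj]
    by (simp add: rsign_def split_def sum_negf comp_def)
  then show "fps_nth (rod_fps (rod_bar A)) n = fps_nth (- rod_fps A) n"
    by (simp add: rod_fps_def)
qed

lemma rods_of_length_rod_prod: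
  "rods_of_length (rod_prod A B) n
   = (\<lambda>(q, r). (rlen q + rlen r, (q, r), rsign q * rsign r))
       ` (SIGMA q:{q\<in>A. rlen q \<le> n}. rods_of_length B (n - rlen q))"
  by (force simp: rods_of_length_def rod_prod_def rlen_def image_iff)

lemma is_rodset_rod_prod:
  assumes A: "is_rodset A" and B: "is_rodset B" shows "is_rodset (rod_prod A B)"
proof (rule is_rodsetI)
  show "finite (rods_of_length (rod_prod A B) n)" for n
    by (simp add: rods_of_length_rod_prod finite_rods_of_length_le[OF A] finite_rods_of_length[OF B])
next
  fix k assume "k \<in> rod_prod A B"
  then obtain q r where k: "k = (rlen q + rlen r, (q, r), rsign q * rsign r)" and "q \<in> A" "r \<in> B"
    by (auto simp: rod_prod_def)
  then have "rlen q > 0" "rsign q = 1 \<or> rsign q = -1" "rsign r = 1 \<or> rsign r = -1"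
    using A B by (auto simp: is_rodset_def)
  then show "rlen k > 0" "rsign k = 1 \<or> rsign k = -1"
    using k by (auto simp: rlen_def rsign_def)
qed

lemma rod_fps_rod_prod:
  assumes A: "is_rodset A" and B: "is_rodset B"
  shows "rod_fps (rod_prod A B) = rod_fps A * rod_fps B"
proof (rule fps_ext)
  fix n
  let ?P = "SIGMA q:{q\<in>A. rlen q \<le> n}. rods_of_length B (n - rlen q)"
  have inj: "inj_on (\<lambda>(q, r). (rlen q + rlen r, (q, r), rsign q * rsign r)) ?P"
    by (auto simp: inj_on_def)
  have "signed_count (rod_prod A B) n = (\<Sum>(q, r)\<in>?P. rsign q * rsign r)"
    unfolding signed_count_def rods_of_length_rod_prod sum.reindex[OF inj]
    by (simp add: rsign_def case_prod_beta comp_def)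
  also have "\<dots> = (\<Sum>q\<in>{q\<in>A. rlen q \<le> n}. rsign q * signed_count B (n - rlen q))"
    by (simp add: sum.Sigma finite_rods_of_length_le[OF A] finite_rods_of_length[OF B]
        signed_count_def sum_distrib_left)
  also have "\<dots> = (\<Sum>m=0..n. signed_count A m * signed_count B (n - m))"
    by (rule sum_rods_length_le_group[OF A])
  finally show "fps_nth (rod_fps (rod_prod A B)) n = fps_nth (rod_fps A * rod_fps B) n"
    by (simp add: rod_fps_def fps_mult_nth)
qed

lemma rods_of_length_train_rods:
  "rods_of_length (train_rods R) n = (\<lambda>t. (tlen t, t, tsign t)) ` {t\<in>trains_of_length R n. t \<noteq> []}"
  by (auto simp: rods_of_length_def train_rods_def trains_of_length_def Trains_def rlen_def)

lemma is_rodset_train_rods: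
  assumes R: "is_rodset R" shows "is_rodset (train_rods R)"
proof (rule is_rodsetI)
  show "finite (rods_of_length (train_rods R) n)" for n
    unfolding rods_of_length_train_rods using finite_trains_of_length[OF R] by simp
next
  fix k assume "k \<in> train_rods R"
  then obtain t where "k = (tlen t, t, tsign t)" "t \<in> lists R" "t \<noteq> []"
    by (auto simp: train_rods_def Trains_def)
  then show "rlen k > 0" "rsign k = 1 \<or> rsign k = -1"
    using tlen_pos[OF R] tsign_cases[OF R] by (auto simp: rlen_def rsign_def)
qed

lemma rod_fps_train_rods:
  assumes R: "is_rodset R" shows "rod_fps (train_rods R) = train_fps R - 1"
proof (rule fps_ext)
  fix n
  show "fps_nth (rod_fps (train_rods R)) n = fps_nth (train_fps R - 1) n"
  proof (cases "n = 0")
    case True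
    then show ?thesis
      using signed_count_0[OF is_rodset_train_rods[OF R]] F_0[OF R]
      by (simp add: rod_fps_def train_fps_def)
  next
    case False
    then have "{t\<in>trains_of_length R n. t \<noteq> []} = trains_of_length R n"
      by (auto simp: trains_of_length_def)
    moreover have "inj_on (\<lambda>t. (tlen t, t, tsign t)) (trains_of_length R n)"
      by (auto simp: inj_on_def)
    ultimately show ?thesis
      using False by (simp add: rod_fps_def train_fps_def signed_count_def rods_of_length_train_rods
          sum.reindex F_eq_sum_trains_of_length rsign_def)
  qed
qed

subsection \<open>The four conditions as identities of power series\<close>

lemma fps_eq_iff_nth_pos:
  "fps_nth f 0 = fps_nth g 0 \<Longrightarrow> f = g \<longleftrightarrow> (\<forall>n>0. fps_nth f n = fps_nth g n)"
  by (metis fps_ext gr0I)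

lemma rod_arrow_iff_rod_fps:
  assumes R: "is_rodset R" and Q: "is_rodset Q" and S: "is_rodset S"
  shows "rod_arrow R Q S \<longleftrightarrow> rod_fps S = rod_fps R - rod_fps Q + rod_fps Q * rod_fps R"
  unfolding rod_arrow_def
  by (simp add: rod_equiv_iff_rod_fps_eq S Q R is_rodset_rod_union is_rodset_rod_bar is_rodset_rod_prod
      rod_fps_rod_union rod_fps_rod_bar rod_fps_rod_prod)

lemma discrepancy_iff_train_fps:
  assumes R: "is_rodset R" and Q: "is_rodset Q" and S: "is_rodset S"
  shows "(\<forall>n>0. D n R S = C n Q) \<longleftrightarrow> train_fps R * (1 - rod_fps S) = 1 + rod_fps Q"
proof -
  have "D n R S = fps_nth (train_fps R * (1 - rod_fps S)) n" for n
    using fps_nth_rod_fps_mult_train_fps[OF S, of R n]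
    by (simp add: D_def train_fps_def algebra_simps)
  moreover have "C n Q = fps_nth (1 + rod_fps Q) n" if "n > 0" for n
    using that by (simp add: C_eq_signed_count[OF Q] rod_fps_def)
  moreover have "fps_nth (train_fps R * (1 - rod_fps S)) 0 = fps_nth (1 + rod_fps Q) 0"
    using F_0[OF R] signed_count_0[OF S] signed_count_0[OF Q] by (simp add: train_fps_def rod_fps_def)
  ultimately show ?thesis
    using fps_eq_iff_nth_pos by (metis (no_types, lifting))
qed

lemma train_rods_equiv_iff_train_fps:
  assumes R: "is_rodset R" and Q: "is_rodset Q" and S: "is_rodset S"
  shows "rod_equiv (train_rods R) (rod_union (rod_union (train_rods S) Q) (rod_prod (train_rods S) Q))
     \<longleftrightarrow> train_fps R = train_fps S * (1 + rod_fps Q)"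
proof -
  have "rod_equiv (train_rods R) (rod_union (rod_union (train_rods S) Q) (rod_prod (train_rods S) Q))
    \<longleftrightarrow> train_fps R - 1 = (train_fps S - 1) + rod_fps Q + (train_fps S - 1) * rod_fps Q"
    using is_rodset_train_rods[OF R] is_rodset_train_rods[OF S] Q
    by (simp add: rod_equiv_iff_rod_fps_eq is_rodset_rod_union is_rodset_rod_prod
        rod_fps_rod_union rod_fps_rod_prod rod_fps_train_rods R S)
  also have "\<dots> \<longleftrightarrow> train_fps R = train_fps S * (1 + rod_fps Q)"
    by (auto simp: algebra_simps)
  finally show ?thesis .
qed

lemma train_recurrence_iff_train_fps:
  assumes R: "is_rodset R" and Q: "is_rodset Q" and S: "is_rodset S"
  shows "(\<forall>n>0. F (int n) R = F (int n) S
              + (\<Sum>q\<in>{q\<in>Q. rlen q \<le> n}. rsign q * F (int n - int (rlen q)) S))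
     \<longleftrightarrow> train_fps R = train_fps S * (1 + rod_fps Q)"
proof -
  have "F (int n) S + (\<Sum>q\<in>{q\<in>Q. rlen q \<le> n}. rsign q * F (int n - int (rlen q)) S)
      = fps_nth (train_fps S * (1 + rod_fps Q)) n" for n
    using fps_nth_rod_fps_mult_train_fps[OF Q, of S n]
    by (simp add: train_fps_def algebra_simps)
  moreover have "F (int n) R = fps_nth (train_fps R) n" for n
    by (simp add: train_fps_def)
  moreover have "fps_nth (train_fps R) 0 = fps_nth (train_fps S * (1 + rod_fps Q)) 0"
    using F_0[OF R] F_0[OF S] signed_count_0[OF Q] by (simp add: train_fps_def rod_fps_def)
  ultimately show ?thesis
    using fps_eq_iff_nth_pos by (metis (no_types, lifting))
qed

lemma one_minus_eq_mult_iff: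
  fixes a b q r s :: "'a::comm_ring_1"
  assumes a: "a * (1 - r) = 1" and b: "b * (1 - s) = 1"
  shows "1 - s = (1 + q) * (1 - r) \<longleftrightarrow> a * (1 - s) = 1 + q"
    and "1 - s = (1 + q) * (1 - r) \<longleftrightarrow> a = b * (1 + q)"
proof -
  show "1 - s = (1 + q) * (1 - r) \<longleftrightarrow> a * (1 - s) = 1 + q"
  proof
    assume "1 - s = (1 + q) * (1 - r)"
    then have "a * (1 - s) = (1 + q) * (a * (1 - r))" by (simp add: algebra_simps)
    then show "a * (1 - s) = 1 + q" using a by simp
  next
    assume h: "a * (1 - s) = 1 + q"
    have "1 - s = (a * (1 - r)) * (1 - s)" using a by simp
    also have "\<dots> = (a * (1 - s)) * (1 - r)" by (simp add: algebra_simps)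
    finally show "1 - s = (1 + q) * (1 - r)" using h by simp
  qed
  show "1 - s = (1 + q) * (1 - r) \<longleftrightarrow> a = b * (1 + q)"
  proof
    assume h: "1 - s = (1 + q) * (1 - r)"
    have "a = a * (b * (1 - s))" using b by simp
    also have "\<dots> = b * (1 + q) * (a * (1 - r))" unfolding h by (simp add: algebra_simps)
    finally show "a = b * (1 + q)" using a by simp
  next
    assume h: "a = b * (1 + q)"
    have "1 - s = (a * (1 - r)) * (1 - s)" using a by simp
    also have "\<dots> = (b * (1 - s)) * (1 + q) * (1 - r)" using h by (simp add: algebra_simps)
    finally show "1 - s = (1 + q) * (1 - r)" using b by simp
  qed
qed

theorem mainTheorem8:
  fixes R :: "'a rod set" and Q :: "'b rod set" and S :: "'c rod set"
  assumes "is_rodset R" and "is_rodset Q" and "is_rodset S"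
  shows "(rod_arrow R Q S \<longleftrightarrow> (\<forall>n>0. D n R S = C n Q))
       \<and> (rod_arrow R Q S \<longleftrightarrow>
            rod_equiv (train_rods R)
              (rod_union (rod_union (train_rods S) Q) (rod_prod (train_rods S) Q)))
       \<and> (rod_arrow R Q S \<longleftrightarrow>
            (\<forall>n>0. F (int n) R = F (int n) S
                 + (\<Sum>q\<in>{q\<in>Q. rlen q \<le> n}. rsign q * F (int n - int (rlen q)) S)))"
proof -
  have "rod_arrow R Q S \<longleftrightarrow> 1 - rod_fps S = (1 + rod_fps Q) * (1 - rod_fps R)"
    unfolding rod_arrow_iff_rod_fps[OF assms] by (auto simp: algebra_simps)
  moreover note one_minus_eq_mult_iff[OF train_fps_mult_one_minus_rod_fps[OF assms(1)]
      train_fps_mult_one_minus_rod_fps[OF assms(3)], of "rod_fps Q"]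
  ultimately show ?thesis
    by (simp add: discrepancy_iff_train_fps[OF assms] train_rods_equiv_iff_train_fps[OF assms]
        train_recurrence_iff_train_fps[OF assms])
qed

end
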